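(* The generating function $$F_{(123,132)}(x,p,q,u,v,s,t)=\sum_{n\ge0}\ \sum_{\pi\in S_n(123,132)} x^n p^{\operatorname{asc}(\pi)}q^{\operatorname{des}(\pi)}u^{\operatorname{lrmax}(\pi)}v^{\operatorname{rlmax}(\pi)}s^{\operatorname{lrmin}(\pi)}t^{\operatorname{rlmin}(\pi)}$$ is equal to $$\frac{1 + q^2 s^2 v x^2 + s t u v x (1 + p t u x) - q s x \bigl(1 + p u v^2 x^2 s t(-1 + t)(-1 + u) + v (1 + p x + s t u x)\bigr)}{1 + q^2 s^2 v x^2 - q s x (1 + v + p v x)}.$$
   Context: For $n\ge 0$, $S_n$ denotes the set of permutations $\pi=\pi_1\cdots\pi_n$ of $[n]=\{1,\dots,n\}$ ($S_0$ consists of the empty permutation, for which all statistics are $0$). $\pi$ avoids a pattern $\tau\in S_k$ if no subsequence $\pi_{i_1}\cdots\pi_{i_k}$ ($i_1<\dots<i_k$) satisfies $\pi_{i_a}<\pi_{i_b}\iff\tau_a<\tau_b$; $S_n(\tau,\rho)$ is the set of permutations in $S_n$ avoiding both $\tau$ and $\rho$. $\operatorname{asc}(\pi)$ (resp. $\operatorname{des}(\pi)$) is the number of $i\in[n-1]$ with $\pi_i<\pi_{i+1}$ (resp. $\pi_i>\pi_{i+1}$). $\pi_i$ is a left-to-right maximum (resp. minimum) if it is larger (resp. smaller) than every $\pi_j$ with $j<i$, and a right-to-left maximum (resp. minimum) if it is larger (resp. smaller) than every $\pi_j$ with $j>i$; $\operatorname{lrmax},\operatorname{lrmin},\operatorname{rlmax},\operatorname{rlmin}$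 count these (so $\pi_1$ is always a left-to-right maximum and minimum, $\pi_n$ always a right-to-left maximum and minimum). *)

theory Defs
  imports Complex_Main "HOL-Computational_Algebra.Formal_Power_Series"
begin

(* Permutations of [n] in one-line notation, as lists pi_1 ... pi_n (0-indexed list positions). *)
definition perms :: "nat \<Rightarrow> nat list set" where
  "perms n = {xs. distinct xs \<and> set xs = {1..n}}"

definition contains :: "nat list \<Rightarrow> nat list \<Rightarrow> bool" where
  "contains w tau \<longleftrightarrow> (\<exists>is. length is = length tau \<and> sorted_wrt (<) is \<and>
      (\<forall>i\<in>set is. i < length w) \<and>
      (\<forall>a<length tau. \<forall>b<length tau. (w ! (is ! a) < w ! (is ! b)) \<longleftrightarrow> (tau ! a < tau ! b)))"

definition avoids :: "nat list \<Rightarrow> nat list \<Rightarrow> bool" where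
  "avoids w tau \<longleftrightarrow> \<not> contains w tau"

definition asc :: "nat list \<Rightarrow> nat" where
  "asc w = card {i. i + 1 < length w \<and> w ! i < w ! (i + 1)}"

definition des :: "nat list \<Rightarrow> nat" where
  "des w = card {i. i + 1 < length w \<and> w ! i > w ! (i + 1)}"

definition lrmax :: "nat list \<Rightarrow> nat" where
  "lrmax w = card {i. i < length w \<and> (\<forall>j<i. w ! j < w ! i)}"

definition lrmin :: "nat list \<Rightarrow> nat" where
  "lrmin w = card {i. i < length w \<and> (\<forall>j<i. w ! j > w ! i)}"

definition rlmax :: "nat list \<Rightarrow> nat" where
  "rlmax w = card {i. i < length w \<and> (\<forall>j. i < j \<and> j < length w \<longrightarrow> w ! j < w ! i)}"

definition rlmin :: "nat list \<Rightarrow> nat" where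
  "rlmin w = card {i. i < length w \<and> (\<forall>j. i < j \<and> j < length w \<longrightarrow> w ! j > w ! i)}"

(* The generating function F_{(123,132)}(x,p,q,u,v,s,t) as a formal power series in x,
   with the remaining variables specialised to arbitrary complex numbers. *)
definition F_123_132 :: "complex \<Rightarrow> complex \<Rightarrow> complex \<Rightarrow> complex \<Rightarrow> complex \<Rightarrow> complex \<Rightarrow> complex fps" where
  "F_123_132 p q u v s t = Abs_fps (\<lambda>n.
     \<Sum>w\<in>{w\<in>perms n. avoids w [1,2,3] \<and> avoids w [1,3,2]}.
        p ^ asc w * q ^ des w * u ^ lrmax w * v ^ rlmax w * s ^ lrmin w * t ^ rlmin w)"

end

theory Submission
  imports Defs "HOL-Combinatorics.Transposition"
begin

(* A permutation avoids 123 and 132 exactly when no entry is followed by two larger entries.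
   Hence, for n >= 1, an avoider of [n+1] either is n+1 followed by an avoider of [n], or is n
   followed by an avoider of [n] in which the value n has been renamed n+1.  Following the six
   statistics through these two constructions, the weights a_n and b_n (without the factor u) of
   the avoiders of [n] that start, resp. do not start, with n satisfy
   a_(n+1) = qsv (a_n + b_n) and b_(n+1) = p a_n + qs b_n for n >= 2, while lrmax is 1, resp. 2.
   So the n-th coefficient u a_n + u^2 b_n obeys the linear recurrence whose characteristic
   polynomial is the denominator, and the numerator is read off from the first four
   coefficients. *)

unbundle fps_syntax

section \<open>Avoiding 123 and 132\<close>

lemma contains_length3_iff:
  assumes "length \<tau> = 3"
  shows "contains w \<tau> \<longleftrightarrow> (\<exists>i j k. i < j \<and> j < k \<and> k < length w \<and>
    (\<forall>a<3. \<forall>b<3. w ! ([i, j, k] ! a) < w ! ([i, j, k] ! b) \<longleftrightarrow> \<tau> ! a < \<tau> ! b))"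
    (is "_ \<longleftrightarrow> (\<exists>i j k. ?occ i j k)")
proof
  assume "contains w \<tau>"
  then obtain "is" where "length is = 3" "sorted_wrt (<) is" "\<forall>i\<in>set is. i < length w"
    "\<forall>a<3. \<forall>b<3. w ! (is ! a) < w ! (is ! b) \<longleftrightarrow> \<tau> ! a < \<tau> ! b"
    unfolding contains_def assms by blast
  moreover from \<open>length is = 3\<close> obtain i j k where "is = [i, j, k]"
    by (auto simp: numeral_3_eq_3 length_Suc_conv)
  ultimately have "?occ i j k" by simp
  then show "\<exists>i j k. ?occ i j k" by blast
next
  assume "\<exists>i j k. ?occ i j k"
  then obtain i j k where "?occ i j k" by blast
  then show "contains w \<tau>"
    unfolding contains_def assms by (intro exI[of _ "[i, j, k]"]) simp
qed

lemma contains_123_iff: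
  "contains w [1, 2, 3] \<longleftrightarrow> (\<exists>i j k. i < j \<and> j < k \<and> k < length w \<and> w!i < w!j \<and> w!j < w!k)"
proof -
  have "(\<forall>a<3. \<forall>b<3. w ! ([i, j, k] ! a) < w ! ([i, j, k] ! b) \<longleftrightarrow> [1, 2, 3::nat] ! a < [1, 2, 3] ! b)
    \<longleftrightarrow> w!i < w!j \<and> w!j < w!k" for i j k
    by (auto simp: numeral_3_eq_3 All_less_Suc)
  then show ?thesis by (simp add: contains_length3_iff)
qed

lemma contains_132_iff:
  "contains w [1, 3, 2] \<longleftrightarrow> (\<exists>i j k. i < j \<and> j < k \<and> k < length w \<and> w!i < w!k \<and> w!k < w!j)"
proof -
  have "(\<forall>a<3. \<forall>b<3. w ! ([i, j, k] ! a) < w ! ([i, j, k] ! b) \<longleftrightarrow> [1, 3, 2::nat] ! a < [1, 3, 2] ! b)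
    \<longleftrightarrow> w!i < w!k \<and> w!k < w!j" for i j k
    by (auto simp: numeral_3_eq_3 All_less_Suc)
  then show ?thesis by (simp add: contains_length3_iff)
qed

lemma two_le_length_filter_iff:
  "2 \<le> length (filter P w) \<longleftrightarrow> (\<exists>j k. j < k \<and> k < length w \<and> P (w!j) \<and> P (w!k))"
proof -
  let ?S = "{i. i < length w \<and> P (w!i)}"
  have "2 \<le> card ?S \<longleftrightarrow> (\<exists>j\<in>?S. \<exists>k\<in>?S. j < k)"
  proof
    assume "2 \<le> card ?S"
    then obtain j B where "?S = insert j B" "j \<notin> B" "1 \<le> card B"
      using card_le_Suc_iff[of 1 ?S] by (auto simp: numeral_2_eq_2)
    moreover obtain k where "k \<in> B"
      using \<open>1 \<le> card B\<close> by fastforce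
    ultimately show "\<exists>j\<in>?S. \<exists>k\<in>?S. j < k"
      by (metis insertCI linorder_neqE_nat)
  next
    assume "\<exists>j\<in>?S. \<exists>k\<in>?S. j < k"
    then obtain j k where "j \<in> ?S" "k \<in> ?S" "j < k"
      by blast
    then have "card {j, k} \<le> card ?S"
      by (intro card_mono) auto
    with \<open>j < k\<close> show "2 \<le> card ?S"
      by simp
  qed
  then show ?thesis
    by (auto simp: length_filter_conv_card intro: order.strict_trans)
qed

definition no_two_larger_after :: "nat list \<Rightarrow> bool" where
  "no_two_larger_after w \<longleftrightarrow> (\<forall>i<length w. length (filter (\<lambda>x. w!i < x) (drop (Suc i) w)) \<le> 1)"

lemma ex_two_larger_after_iff:
  "(\<exists>j k. i < j \<and> j < k \<and> k < length w \<and> w!i < w!j \<and> w!i < w!k) \<longleftrightarrow>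
    i < length w \<and> 2 \<le> length (filter (\<lambda>x. w!i < x) (drop (Suc i) w))"
proof -
  have "(\<exists>j k. i < j \<and> j < k \<and> k < length w \<and> w!i < w!j \<and> w!i < w!k) \<longleftrightarrow>
    (\<exists>j k. j < k \<and> k < length w - Suc i \<and> w!i < w!(Suc i + j) \<and> w!i < w!(Suc i + k))"
  proof
    assume "\<exists>j k. i < j \<and> j < k \<and> k < length w \<and> w!i < w!j \<and> w!i < w!k"
    then obtain j k where "i < j" "j < k" "k < length w" "w!i < w!j" "w!i < w!k"
      by blast
    moreover obtain j' k' where "j = Suc (i + j')" "k = Suc (i + k')"
      using \<open>i < j\<close> \<open>j < k\<close> by (metis less_imp_Suc_add less_trans)
    ultimately show "\<exists>j k. j < k \<and> k < length w - Suc i \<and> w!i < w!(Suc i + j) \<and> w!i < w!(Suc i + k)"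
      by (intro exI[of _ j'] exI[of _ k']) simp
  next
    assume "\<exists>j k. j < k \<and> k < length w - Suc i \<and> w!i < w!(Suc i + j) \<and> w!i < w!(Suc i + k)"
    then obtain j k where "j < k" "k < length w - Suc i" "w!i < w!(Suc i + j)" "w!i < w!(Suc i + k)"
      by blast
    then show "\<exists>j k. i < j \<and> j < k \<and> k < length w \<and> w!i < w!j \<and> w!i < w!k"
      by (intro exI[of _ "Suc i + j"] exI[of _ "Suc i + k"]) simp
  qed
  then show ?thesis
    by (cases "i < length w") (simp_all add: two_le_length_filter_iff)
qed

lemma avoids_123_132_iff:
  assumes "distinct w"
  shows "avoids w [1, 2, 3] \<and> avoids w [1, 3, 2] \<longleftrightarrow> no_two_larger_after w"
proof -
  have "contains w [1, 2, 3] \<or> contains w [1, 3, 2] \<longleftrightarrow>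
      (\<exists>i j k. i < j \<and> j < k \<and> k < length w \<and> w!i < w!j \<and> w!i < w!k)"
    (is "_ \<longleftrightarrow> (\<exists>i j k. ?two i j k)")
  proof
    assume "contains w [1, 2, 3] \<or> contains w [1, 3, 2]"
    then obtain i j k where "i < j" "j < k" "k < length w"
      and "w!i < w!j \<and> w!j < w!k \<or> w!i < w!k \<and> w!k < w!j"
      unfolding contains_123_iff contains_132_iff by blast
    then have "?two i j k" by auto
    then show "\<exists>i j k. ?two i j k" by blast
  next
    assume "\<exists>i j k. ?two i j k"
    then obtain i j k where two: "?two i j k" by blast
    then have "w!j \<noteq> w!k"
      using assms by (simp add: nth_eq_iff_index_eq)
    then consider "w!j < w!k" | "w!k < w!j" by linarith
    then show "contains w [1, 2, 3] \<or> contains w [1, 3, 2]"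
      unfolding contains_123_iff contains_132_iff using two by cases blast+
  qed
  also have "\<dots> \<longleftrightarrow> \<not> no_two_larger_after w"
    unfolding ex_two_larger_after_iff no_two_larger_after_def by auto
  finally show ?thesis
    unfolding avoids_def by blast
qed

lemma no_two_larger_after_Cons:
  "no_two_larger_after (a # w) \<longleftrightarrow> no_two_larger_after w \<and> length (filter ((<) a) w) \<le> 1"
  by (simp add: no_two_larger_after_def All_less_Suc2 conj_commute)

lemma no_two_larger_after_map:
  assumes "\<And>x y. x \<in> set w \<Longrightarrow> y \<in> set w \<Longrightarrow> f x < f y \<longleftrightarrow> x < y"
  shows "no_two_larger_after (map f w) \<longleftrightarrow> no_two_larger_after w"
proof -
  have "filter (\<lambda>x. f (w!i) < x) (drop (Suc i) (map f w)) = map f (filter (\<lambda>x. w!i < x) (drop (Suc i) w))"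
    if "i < length w" for i
  proof -
    have "f (w!i) < f x \<longleftrightarrow> w!i < x" if "x \<in> set (drop (Suc i) w)" for x
      using assms[OF nth_mem[OF \<open>i < length w\<close>] in_set_dropD[OF that]] .
    then show ?thesis
      by (simp add: drop_map filter_map comp_def cong: filter_cong)
  qed
  then show ?thesis
    by (simp add: no_two_larger_after_def)
qed

section \<open>Permutation statistics\<close>

lemma card_Collect_less_Suc:
  "card {i. i < Suc m \<and> P i} = (if P 0 then 1 else 0) + card {i. i < m \<and> P (Suc i)}"
  using card_less_Suc[of "Collect P" m] card_less_Suc2[of "Collect P" m] by (simp add: conj_commute)

lemma all_less_Suc_shift:
  "(\<forall>j. i < j \<and> j < Suc m \<longrightarrow> Q j) \<longleftrightarrow> (\<forall>j. i \<le> j \<and> j < m \<longrightarrow> Q (Suc j))"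
proof
  assume "\<forall>j. i < j \<and> j < Suc m \<longrightarrow> Q j"
  then show "\<forall>j. i \<le> j \<and> j < m \<longrightarrow> Q (Suc j)"
    by (simp add: le_imp_less_Suc)
next
  assume shifted: "\<forall>j. i \<le> j \<and> j < m \<longrightarrow> Q (Suc j)"
  show "\<forall>j. i < j \<and> j < Suc m \<longrightarrow> Q j"
  proof (intro allI impI)
    fix j
    assume "i < j \<and> j < Suc m"
    then obtain j' where "j = Suc j'" "i \<le> j'" "j' < m"
      by (cases j) auto
    then show "Q j"
      using shifted by blast
  qed
qed

lemma asc_Cons_Cons: "asc (a # b # w) = asc (b # w) + (if a < b then 1 else 0)"
  by (simp add: asc_def card_Collect_less_Suc)

lemma des_Cons_Cons: "des (a # b # w) = des (b # w) + (if b < a then 1 else 0)"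
  by (simp add: des_def card_Collect_less_Suc)

lemma lrmax_Cons: "lrmax (a # w) = 1 + card {i. i < length w \<and> a < w!i \<and> (\<forall>j<i. w!j < w!i)}"
  by (simp add: lrmax_def card_Collect_less_Suc All_less_Suc2)

lemma lrmin_Cons: "lrmin (a # w) = 1 + card {i. i < length w \<and> w!i < a \<and> (\<forall>j<i. w!i < w!j)}"
  by (simp add: lrmin_def card_Collect_less_Suc All_less_Suc2)

lemma rlmax_Cons: "rlmax (a # w) = rlmax w + (if \<forall>x\<in>set w. x < a then 1 else 0)"
  by (simp add: rlmax_def card_Collect_less_Suc all_less_Suc_shift all_set_conv_all_nth Suc_le_eq)

lemma rlmin_Cons: "rlmin (a # w) = rlmin w + (if \<forall>x\<in>set w. a < x then 1 else 0)"
  by (simp add: rlmin_def card_Collect_less_Suc all_less_Suc_shift all_set_conv_all_nth Suc_le_eq)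

lemma stats_Nil:
  "asc [] = 0" "des [] = 0" "lrmax [] = 0" "lrmin [] = 0" "rlmax [] = 0" "rlmin [] = 0"
  by (simp_all add: asc_def des_def lrmax_def lrmin_def rlmax_def rlmin_def)

lemma stats_singleton:
  "asc [a] = 0" "des [a] = 0" "lrmax [a] = 1" "lrmin [a] = 1" "rlmax [a] = 1" "rlmin [a] = 1"
  by (simp_all add: asc_def des_def lrmax_Cons lrmin_Cons rlmax_Cons rlmin_Cons stats_Nil)

lemma stats_map:
  assumes "\<And>x y. x \<in> set w \<Longrightarrow> y \<in> set w \<Longrightarrow> f x < f y \<longleftrightarrow> x < y"
  shows "asc (map f w) = asc w" "des (map f w) = des w"
    "lrmax (map f w) = lrmax w" "lrmin (map f w) = lrmin w"
    "rlmax (map f w) = rlmax w" "rlmin (map f w) = rlmin w"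
proof -
  have nth: "f (w!i) < f (w!j) \<longleftrightarrow> w!i < w!j" if "i < length w" "j < length w" for i j
    using assms nth_mem that by blast
  show "asc (map f w) = asc w" "des (map f w) = des w"
    "lrmax (map f w) = lrmax w" "lrmin (map f w) = lrmin w"
    by (simp_all add: asc_def des_def lrmax_def lrmin_def nth cong: conj_cong)
  have "(\<forall>j. i < j \<and> j < length w \<longrightarrow> f (w!j) < f (w!i)) \<longleftrightarrow> (\<forall>j. i < j \<and> j < length w \<longrightarrow> w!j < w!i)"
    "(\<forall>j. i < j \<and> j < length w \<longrightarrow> f (w!i) < f (w!j)) \<longleftrightarrow> (\<forall>j. i < j \<and> j < length w \<longrightarrow> w!i < w!j)"
    if "i < length w" for i
    using nth that by auto
  then show "rlmax (map f w) = rlmax w" "rlmin (map f w) = rlmin w"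
    by (simp_all add: rlmax_def rlmin_def cong: conj_cong)
qed

lemma lrmax_Cons_greater:
  assumes "\<forall>x\<in>set w. x < a"
  shows "lrmax (a # w) = 1"
proof -
  have "\<not> a < w!i" if "i < length w" for i
    using assms nth_mem[OF that] by (meson less_asym)
  then show ?thesis
    by (simp add: lrmax_Cons cong: conj_cong)
qed

lemma stats_Cons_greater:
  assumes "w \<noteq> []" and less: "\<forall>x\<in>set w. x < a"
  shows "asc (a # w) = asc w" "des (a # w) = des w + 1"
    "lrmin (a # w) = lrmin w + 1" "rlmax (a # w) = rlmax w + 1" "rlmin (a # w) = rlmin w"
proof -
  obtain b w' where w: "w = b # w'"
    using assms(1) by (cases w) auto
  show "asc (a # w) = asc w" "des (a # w) = des w + 1"
    using less unfolding w by (simp_all add: asc_Cons_Cons des_Cons_Cons)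
  have "w!i < a" if "i < length w" for i
    using less nth_mem[OF that] by blast
  then show "lrmin (a # w) = lrmin w + 1"
    unfolding lrmin_Cons by (simp add: lrmin_def cong: conj_cong)
  show "rlmax (a # w) = rlmax w + 1"
    using less by (simp add: rlmax_Cons)
  show "rlmin (a # w) = rlmin w"
    using less unfolding w by (auto simp: rlmin_Cons)
qed

lemma stats_Cons_second_largest:
  assumes "distinct w" and set_w: "set w = insert (Suc n) {1..<n}" and "n \<noteq> 0"
  shows "asc (n # w) = asc w + (if hd w = Suc n then 1 else 0)"
    "des (n # w) = des w + (if hd w = Suc n then 0 else 1)"
    "lrmax (n # w) = 2"
    "lrmin (n # w) + (if hd w = Suc n then 1 else 0) = lrmin w + 1"
    "rlmax (n # w) = rlmax w"
    "rlmin (n # w) = rlmin w + (if n = 1 then 1 else 0)"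
proof -
  obtain k where k: "k < length w" "w!k = Suc n"
    using set_w by (metis in_set_conv_nth insertI1)
  have entry: "w!i = Suc n \<or> w!i < n" if "i < length w" for i
    using set_w nth_mem[OF that] by auto
  have at_k: "w!i = Suc n \<longleftrightarrow> i = k" if "i < length w" for i
    using nth_eq_iff_index_eq[OF assms(1) that k(1)] k(2) by simp
  have below_n: "w!i < n \<longleftrightarrow> i \<noteq> k" if "i < length w" for i
    using entry[OF that] at_k[OF that] by auto
  obtain b w' where w: "w = b # w'"
    using k(1) by (cases w) auto
  have hd_w: "hd w = Suc n \<longleftrightarrow> k = 0"
    using at_k[of 0] w by simp
  have "b = Suc n \<or> b < n"
    using entry[of 0] w by simp
  then show "asc (n # w) = asc w + (if hd w = Suc n then 1 else 0)"
    "des (n # w) = des w + (if hd w = Suc n then 0 else 1)"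
    unfolding w by (auto simp: asc_Cons_Cons des_Cons_Cons)
  have "{i. i < length w \<and> n < w!i \<and> (\<forall>j<i. w!j < w!i)} = {k}"
  proof -
    have "w!j < w!k" if "j < k" for j
      using below_n[of j] that k by simp
    moreover have "n < w!i \<longleftrightarrow> i = k" if "i < length w" for i
      using entry[OF that] at_k[OF that] by auto
    ultimately show ?thesis
      using k(1) by auto
  qed
  then show "lrmax (n # w) = 2"
    by (simp add: lrmax_Cons)
  define lrmins where "lrmins = {i. i < length w \<and> (\<forall>j<i. w!i < w!j)}"
  have "finite lrmins"
    unfolding lrmins_def by simp
  have "{i. i < length w \<and> w!i < n \<and> (\<forall>j<i. w!i < w!j)} = lrmins - {k}"
    unfolding lrmins_def using below_n by auto
  then have lrmin_Cons_w: "lrmin (n # w) = 1 + card (lrmins - {k})"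
    by (simp add: lrmin_Cons)
  have k_lrmin: "k \<in> lrmins \<longleftrightarrow> k = 0"
  proof
    assume "k \<in> lrmins"
    show "k = 0"
    proof (rule ccontr)
      assume "k \<noteq> 0"
      then have "w!0 < n"
        using below_n[of 0] w by simp
      with \<open>k \<in> lrmins\<close> \<open>k \<noteq> 0\<close> k(2) show False
        unfolding lrmins_def by (auto dest: spec[of _ 0])
    qed
  qed (use k(1) in \<open>simp add: lrmins_def\<close>)
  have "lrmin w = card lrmins"
    unfolding lrmin_def lrmins_def ..
  then show "lrmin (n # w) + (if hd w = Suc n then 1 else 0) = lrmin w + 1"
    using lrmin_Cons_w k_lrmin hd_w card.remove[OF \<open>finite lrmins\<close>, of k]
    by (cases "k = 0") simp_all
  show "rlmax (n # w) = rlmax w"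
    using set_w by (simp add: rlmax_Cons)
  show "rlmin (n # w) = rlmin w + (if n = 1 then 1 else 0)"
    using set_w \<open>n \<noteq> 0\<close> by (auto simp: rlmin_Cons)
qed

section \<open>The recursive structure of the avoiders\<close>

(* Renaming the value n to n+1 in a permutation of [n] is done by the transposition of n and
   n+1; being an involution, the same map undoes the renaming. *)
abbreviation swap_succ :: "nat \<Rightarrow> nat list \<Rightarrow> nat list" where
  "swap_succ n \<equiv> map (Transposition.transpose n (Suc n))"

lemma transpose_Suc_less_iff:
  assumes "n \<notin> A \<or> Suc n \<notin> A" and "x \<in> A" and "y \<in> A"
  shows "Transposition.transpose n (Suc n) x < Transposition.transpose n (Suc n) y \<longleftrightarrow> x < y"
  using assms by (auto simp: transpose_def)

lemma image_transpose_eq: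
  assumes "a \<in> A" and "b \<notin> A"
  shows "Transposition.transpose a b ` A = insert b (A - {a})"
  using assms by (auto simp: in_transpose_image_iff transpose_def split: if_splits)

lemma set_swap_succ:
  assumes "set \<sigma> = {1..n}" and "n \<noteq> 0"
  shows "set (swap_succ n \<sigma>) = insert (Suc n) {1..<n}"
proof -
  have "set (swap_succ n \<sigma>) = Transposition.transpose n (Suc n) ` {1..n}"
    using assms(1) by simp
  also have "\<dots> = insert (Suc n) ({1..n} - {n})"
    using assms(2) by (intro image_transpose_eq) auto
  also have "{1..n} - {n} = {1..<n}"
    by auto
  finally show ?thesis .
qed

lemma hd_swap_succ:
  assumes "\<sigma> \<noteq> []"
  shows "hd (swap_succ n \<sigma>) = Suc n \<longleftrightarrow> hd \<sigma> = n"
  using assms by (simp add: hd_map transpose_def)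

lemma stats_swap_succ:
  assumes "Suc n \<notin> set \<sigma>"
  shows "asc (swap_succ n \<sigma>) = asc \<sigma>" "des (swap_succ n \<sigma>) = des \<sigma>"
    "lrmax (swap_succ n \<sigma>) = lrmax \<sigma>" "lrmin (swap_succ n \<sigma>) = lrmin \<sigma>"
    "rlmax (swap_succ n \<sigma>) = rlmax \<sigma>" "rlmin (swap_succ n \<sigma>) = rlmin \<sigma>"
  using stats_map[of \<sigma> "Transposition.transpose n (Suc n)"] transpose_Suc_less_iff[of n "set \<sigma>"] assms
  by simp_all

definition avoiders :: "nat \<Rightarrow> nat list set" where
  "avoiders n = {w \<in> perms n. no_two_larger_after w}"

lemma avoiders_eq: "{w \<in> perms n. avoids w [1, 2, 3] \<and> avoids w [1, 3, 2]} = avoiders n"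
  unfolding avoiders_def perms_def using avoids_123_132_iff by blast

lemma length_perms: "w \<in> perms n \<Longrightarrow> length w = n"
  using distinct_card[of w] by (simp add: perms_def)

lemma finite_avoiders: "finite (avoiders n)"
proof (rule finite_subset)
  show "avoiders n \<subseteq> {w. set w \<subseteq> {1..n} \<and> length w = n}"
    using length_perms by (auto simp: avoiders_def perms_def)
  show "finite {w. set w \<subseteq> {1..n} \<and> length w = n}"
    by (rule finite_lists_length_eq) simp
qed

lemma avoiders_0: "avoiders 0 = {[]}"
  by (auto simp: avoiders_def perms_def no_two_larger_after_def)

lemma Cons_Suc_mem_avoiders:
  assumes "\<sigma> \<in> avoiders n"
  shows "Suc n # \<sigma> \<in> avoiders (Suc n)"
proof -
  have "distinct \<sigma>" "set \<sigma> = {1..n}" "no_two_larger_after \<sigma>"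
    using assms by (auto simp: avoiders_def perms_def)
  moreover have "filter ((<) (Suc n)) \<sigma> = []"
    using \<open>set \<sigma> = {1..n}\<close> by (auto simp: filter_empty_conv)
  ultimately show ?thesis
    by (auto simp: avoiders_def perms_def no_two_larger_after_Cons atLeastAtMostSuc_conv)
qed

lemma Cons_swap_succ_mem_avoiders:
  assumes "\<sigma> \<in> avoiders n" and "n \<noteq> 0"
  shows "n # swap_succ n \<sigma> \<in> avoiders (Suc n)"
proof -
  have \<sigma>: "distinct \<sigma>" "set \<sigma> = {1..n}" "no_two_larger_after \<sigma>"
    using assms(1) by (auto simp: avoiders_def perms_def)
  have set_swap: "set (swap_succ n \<sigma>) = insert (Suc n) {1..<n}"
    using \<sigma>(2) assms(2) by (rule set_swap_succ)
  have distinct_swap: "distinct (swap_succ n \<sigma>)"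
    using \<sigma>(1) by (simp add: distinct_map)
  have "no_two_larger_after (swap_succ n \<sigma>)"
    using \<sigma>(2,3) transpose_Suc_less_iff[of n "set \<sigma>"] by (subst no_two_larger_after_map) auto
  moreover have "{x. n < x} \<inter> set (swap_succ n \<sigma>) = {Suc n}"
    unfolding set_swap by auto
  then have "length (filter ((<) n) (swap_succ n \<sigma>)) = 1"
    by (simp only: distinct_length_filter[OF distinct_swap]) simp
  ultimately show ?thesis
    using set_swap distinct_swap assms(2)
    by (auto simp: avoiders_def perms_def no_two_larger_after_Cons)
qed

lemma hd_avoiders_Suc:
  assumes "a # w \<in> avoiders (Suc n)"
  shows "a = n \<or> a = Suc n"
proof (rule ccontr)
  assume "\<not> (a = n \<or> a = Suc n)"
  moreover have "insert a (set w) = {1..Suc n}" "a \<notin> set w"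
    using assms by (auto simp: avoiders_def perms_def)
  then have "a \<in> {1..Suc n}" "set w = {1..Suc n} - {a}"
    by auto
  ultimately have "{n, Suc n} \<subseteq> {x. a < x} \<inter> set w"
    by auto
  then have "2 \<le> card ({x. a < x} \<inter> set w)"
    by (metis card_2_iff card_mono finite_Int finite_set n_not_Suc_n)
  moreover have "distinct w" "length (filter ((<) a) w) \<le> 1"
    using assms by (auto simp: avoiders_def perms_def no_two_larger_after_Cons)
  ultimately show False
    by (simp add: distinct_length_filter)
qed

lemma avoiders_Suc:
  "avoiders (Suc n) =
     Cons (Suc n) ` avoiders n \<union> (if n = 0 then {} else (\<lambda>\<sigma>. n # swap_succ n \<sigma>) ` avoiders n)"
proof (intro set_eqI iffI)
  fix w
  assume w: "w \<in> avoiders (Suc n)"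
  then obtain a w' where w_eq: "w = a # w'"
    by (cases w) (auto simp: avoiders_def perms_def)
  have "distinct w'" "a \<notin> set w'" "set w' = {1..Suc n} - {a}" "a \<in> {1..Suc n}"
    "no_two_larger_after w'"
    using w unfolding w_eq by (auto simp: avoiders_def perms_def no_two_larger_after_Cons)
  with hd_avoiders_Suc[OF w[unfolded w_eq]] consider
      "a = Suc n" "w' \<in> avoiders n"
    | "a = n" "n \<noteq> 0" "n \<notin> set w'" "set w' = insert (Suc n) {1..<n}"
    by (fastforce simp: avoiders_def perms_def)
  then show "w \<in> Cons (Suc n) ` avoiders n \<union> (if n = 0 then {} else (\<lambda>\<sigma>. n # swap_succ n \<sigma>) ` avoiders n)"
  proof cases
    case 1
    then show ?thesis
      using w_eq by simp
  next
    case 2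
    have "set (swap_succ n w') = Transposition.transpose (Suc n) n ` set w'"
      by (simp add: transpose_commute)
    also have "\<dots> = {1..n}"
      using 2 by (subst image_transpose_eq) auto
    moreover have "no_two_larger_after (swap_succ n w')"
      using \<open>no_two_larger_after w'\<close> 2(3) transpose_Suc_less_iff[of n "set w'"]
      by (subst no_two_larger_after_map) auto
    ultimately have "swap_succ n w' \<in> avoiders n"
      using \<open>distinct w'\<close> by (simp add: avoiders_def perms_def distinct_map)
    moreover have "w = n # swap_succ n (swap_succ n w')"
      using w_eq 2 by simp
    ultimately have "w \<in> (\<lambda>\<sigma>. n # swap_succ n \<sigma>) ` avoiders n"
      by (rule rev_image_eqI)
    with 2 show ?thesis
      by simp
  qed
next
  fix w
  assume "w \<in> Cons (Suc n) ` avoiders n \<union> (if n = 0 then {} else (\<lambda>\<sigma>. n # swap_succ n \<sigma>) ` avoiders n)"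
  then show "w \<in> avoiders (Suc n)"
    using Cons_Suc_mem_avoiders Cons_swap_succ_mem_avoiders by (auto split: if_splits)
qed

lemma avoiders_1: "avoiders (Suc 0) = {[Suc 0]}"
  by (simp add: avoiders_Suc avoiders_0)

lemma sum_avoiders_Suc:
  assumes "n \<noteq> 0"
  shows "(\<Sum>w\<in>avoiders (Suc n). g w) =
    (\<Sum>\<sigma>\<in>avoiders n. g (Suc n # \<sigma>)) + (\<Sum>\<sigma>\<in>avoiders n. g (n # swap_succ n \<sigma>))"
proof -
  have "inj_on (\<lambda>\<sigma>. n # swap_succ n \<sigma>) (avoiders n)"
    by (rule inj_onI) (simp add: inj_map_eq_map inj_transpose)
  moreover have "Cons (Suc n) ` avoiders n \<inter> (\<lambda>\<sigma>. n # swap_succ n \<sigma>) ` avoiders n = {}"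
    by auto
  ultimately show ?thesis
    using assms finite_avoiders
    by (simp add: avoiders_Suc sum.union_disjoint sum.reindex)
qed

lemma lrmax_avoiders:
  assumes "\<sigma> \<in> avoiders n" and "n \<noteq> 0"
  shows "lrmax \<sigma> = (if hd \<sigma> = n then 1 else 2)"
proof -
  obtain m where n: "n = Suc m"
    using assms(2) not0_implies_Suc by blast
  from assms(1) consider \<tau> where "\<tau> \<in> avoiders m" "\<sigma> = Suc m # \<tau>"
    | \<tau> where "\<tau> \<in> avoiders m" "m \<noteq> 0" "\<sigma> = m # swap_succ m \<tau>"
    unfolding n avoiders_Suc by (auto split: if_splits)
  then show ?thesis
  proof cases
    case 1
    then have "\<forall>x\<in>set \<tau>. x < Suc m"
      by (auto simp: avoiders_def perms_def)
    with 1 n show ?thesis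
      by (simp add: lrmax_Cons_greater)
  next
    case 2
    then have "set \<tau> = {1..m}" "distinct \<tau>"
      by (auto simp: avoiders_def perms_def)
    with 2 show ?thesis
      using n stats_Cons_second_largest(3)[of "swap_succ m \<tau>" m] set_swap_succ[of \<tau> m]
      by (simp add: distinct_map)
  qed
qed

section \<open>Weights and the coefficients of the generating function\<close>

context
  fixes p q v s t :: complex
begin

(* The factor u ^ lrmax is left out: by lrmax_avoiders it only depends on whether the
   permutation starts with its maximum. *)
definition weight :: "nat list \<Rightarrow> complex" where
  "weight w = p ^ asc w * q ^ des w * v ^ rlmax w * s ^ lrmin w * t ^ rlmin w"

lemma weight_Cons_Suc:
  assumes "\<sigma> \<in> avoiders n" and "n \<noteq> 0"
  shows "weight (Suc n # \<sigma>) = q * v * s * weight \<sigma>"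
proof -
  have "\<sigma> \<noteq> []" "\<forall>x\<in>set \<sigma>. x < Suc n"
    using assms length_perms[of \<sigma> n] by (auto simp: avoiders_def perms_def)
  then show ?thesis
    by (simp add: weight_def stats_Cons_greater)
qed

lemma weight_Cons_swap_succ:
  assumes "\<sigma> \<in> avoiders n" and "n \<noteq> 0"
  shows "weight (n # swap_succ n \<sigma>) =
    (if hd \<sigma> = n then p * (if n = 1 then t else 1) else q * s) * weight \<sigma>"
proof -
  have \<sigma>: "distinct \<sigma>" "set \<sigma> = {1..n}" "\<sigma> \<noteq> []"
    using assms length_perms[of \<sigma> n] by (auto simp: avoiders_def perms_def)
  have "distinct (swap_succ n \<sigma>)"
    using \<sigma>(1) by (simp add: distinct_map)
  note second_largest =
    stats_Cons_second_largest[OF this set_swap_succ[OF \<sigma>(2) assms(2)] assms(2)]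
  have "Suc n \<notin> set \<sigma>"
    using \<sigma>(2) by simp
  note swap = stats_swap_succ[OF this] hd_swap_succ[OF \<sigma>(3)]
  show ?thesis
  proof (cases "hd \<sigma> = n")
    case True
    then show ?thesis
      using second_largest(4) by (simp add: weight_def second_largest swap)
  next
    case False
    moreover have "n \<noteq> 1"
      using False \<sigma> by (auto simp: hd_conv_nth length_perms)
    ultimately show ?thesis
      using second_largest(4) by (simp add: weight_def second_largest swap)
  qed
qed

definition weight_max_first :: "nat \<Rightarrow> complex" where
  "weight_max_first n = (\<Sum>\<sigma>\<in>avoiders n. if hd \<sigma> = n then weight \<sigma> else 0)"

definition weight_max_later :: "nat \<Rightarrow> complex" where
  "weight_max_later n = (\<Sum>\<sigma>\<in>avoiders n. if hd \<sigma> = n then 0 else weight \<sigma>)"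

lemma sum_hd_weight:
  "(\<Sum>\<sigma>\<in>avoiders n. (if hd \<sigma> = n then a else b) * weight \<sigma>) =
    a * weight_max_first n + b * weight_max_later n"
  unfolding weight_max_first_def weight_max_later_def sum_distrib_left sum.distrib[symmetric]
  by (rule sum.cong) auto

lemma weight_max_first_Suc:
  assumes "n \<noteq> 0"
  shows "weight_max_first (Suc n) = q * v * s * (weight_max_first n + weight_max_later n)"
proof -
  have "weight_max_first (Suc n) = (\<Sum>\<sigma>\<in>avoiders n. q * v * s * weight \<sigma>)"
    unfolding weight_max_first_def sum_avoiders_Suc[OF assms]
    using assms by (simp add: weight_Cons_Suc)
  also have "\<dots> = q * v * s * (weight_max_first n + weight_max_later n)"
    using sum_hd_weight[of n "q * v * s" "q * v * s"] by (simp add: algebra_simps)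
  finally show ?thesis .
qed

lemma weight_max_later_Suc:
  assumes "n \<noteq> 0"
  shows "weight_max_later (Suc n) =
    p * (if n = 1 then t else 1) * weight_max_first n + q * s * weight_max_later n"
proof -
  have "weight_max_later (Suc n) =
      (\<Sum>\<sigma>\<in>avoiders n. (if hd \<sigma> = n then p * (if n = 1 then t else 1) else q * s) * weight \<sigma>)"
    unfolding weight_max_later_def sum_avoiders_Suc[OF assms]
    using assms by (simp add: weight_Cons_swap_succ)
  then show ?thesis
    by (simp add: sum_hd_weight)
qed

lemma sum_lrmax_weight:
  assumes "n \<noteq> 0"
  shows "(\<Sum>\<sigma>\<in>avoiders n. u ^ lrmax \<sigma> * weight \<sigma>) = u * weight_max_first n + u^2 * weight_max_later n"
proof -
  have "(\<Sum>\<sigma>\<in>avoiders n. u ^ lrmax \<sigma> * weight \<sigma>) =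
      (\<Sum>\<sigma>\<in>avoiders n. (if hd \<sigma> = n then u else u^2) * weight \<sigma>)"
    using assms by (intro sum.cong) (simp_all add: lrmax_avoiders)
  then show ?thesis
    by (simp add: sum_hd_weight)
qed

lemma weight_max_first_1: "weight_max_first (Suc 0) = v * s * t"
  and weight_max_later_1: "weight_max_later (Suc 0) = 0"
  by (simp_all add: weight_max_first_def weight_max_later_def avoiders_1 weight_def stats_singleton)

end

lemma coeff_F_123_132:
  "F_123_132 p q u v s t $ n = (\<Sum>w\<in>avoiders n. u ^ lrmax w * weight p q v s t w)"
  unfolding F_123_132_def avoiders_eq weight_def by (simp add: ac_simps)

lemma coeff_F_123_132_Suc:
  "F_123_132 p q u v s t $ Suc n =
    u * weight_max_first p q v s t (Suc n) + u^2 * weight_max_later p q v s t (Suc n)"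
  by (simp add: coeff_F_123_132 sum_lrmax_weight)

(* For n >= 2 the pair (weight_max_first n, weight_max_later n) is multiplied by the fixed matrix
   ((qvs, qvs), (p, qs)), so by Cayley-Hamilton every linear combination of the two satisfies the
   recurrence given by the trace and the determinant of that matrix. *)
lemma coeff_F_123_132_recurrence:
  assumes "2 \<le> n"
  shows "F_123_132 p q u v s t $ (n + 2) =
    q * s * (1 + v) * F_123_132 p q u v s t $ (n + 1) - (q^2 * s^2 * v - p * q * s * v) * F_123_132 p q u v s t $ n"
proof -
  obtain m where n: "n = Suc m" "m \<noteq> 0"
    using assms by (cases n) auto
  have "n \<noteq> 1" "Suc n \<noteq> 1"
    using assms by auto
  then show ?thesis
    using weight_max_first_Suc[of n] weight_max_first_Suc[of "Suc n"]
      weight_max_later_Suc[of n] weight_max_later_Suc[of "Suc n"] n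
    by (simp add: coeff_F_123_132_Suc algebra_simps power2_eq_square)
qed

lemma coeff_0_F_123_132: "F_123_132 p q u v s t $ 0 = 1"
  by (simp add: coeff_F_123_132 avoiders_0 weight_def stats_Nil)

lemma coeff_F_123_132_initial:
  "F_123_132 p q u v s t $ 1 = u * v * s * t"
  "F_123_132 p q u v s t $ 2 = u * q * v^2 * s^2 * t + u^2 * p * v * s * t^2"
  "F_123_132 p q u v s t $ 3 =
     u * (q^2 * v^3 * s^3 * t + p * q * v^2 * s^2 * t^2) + u^2 * (p * q * v^2 * s^2 * t + p * q * v * s^2 * t^2)"
  by (simp_all add: One_nat_def numeral_3_eq_3 numeral_2_eq_2 coeff_F_123_132_Suc
      weight_max_first_Suc weight_max_later_Suc weight_max_first_1 weight_max_later_1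
      algebra_simps power2_eq_square power3_eq_cube)

lemma fps_times_second_order_recurrence:
  fixes f :: "'a::comm_ring_1 fps"
  assumes "\<And>n. 2 \<le> n \<Longrightarrow> f $ (n + 2) = c1 * f $ (n + 1) - c2 * f $ n"
  shows "f * (1 - fps_const c1 * fps_X + fps_const c2 * fps_X^2) =
    fps_const (f $ 0) + fps_const (f $ 1 - c1 * f $ 0) * fps_X
      + fps_const (f $ 2 - c1 * f $ 1 + c2 * f $ 0) * fps_X^2
      + fps_const (f $ 3 - c1 * f $ 2 + c2 * f $ 1) * fps_X^3"
    (is "?lhs = ?rhs")
proof (rule fps_ext)
  fix m
  have "f * (1 - fps_const c1 * fps_X + fps_const c2 * fps_X^2) =
      f - fps_const c1 * (fps_X * f) + fps_const c2 * (fps_X^2 * f)"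
    by (simp add: algebra_simps)
  then have coeff: "?lhs $ m =
      f $ m - c1 * (if m = 0 then 0 else f $ (m - 1)) + c2 * (if m < 2 then 0 else f $ (m - 2))"
    by (simp add: fps_X_power_mult_nth)
  show "?lhs $ m = ?rhs $ m"
  proof (cases "m \<le> 3")
    case True
    then show ?thesis
      unfolding coeff by (auto simp: le_Suc_eq numeral_3_eq_3 numeral_2_eq_2 fps_X_power_nth)
  next
    case False
    then obtain k where "m = k + 2" "2 \<le> k"
      by (intro that[of "m - 2"]) auto
    then show ?thesis
      unfolding coeff using assms[of k] by (simp add: fps_X_power_nth)
  qed
qed

theorem theorem3:
  fixes p q u v s t :: complex
  defines "x \<equiv> (fps_X :: complex fps)"
      and "P \<equiv> fps_const p" and "Q \<equiv> fps_const q" and "U \<equiv> fps_const u"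
      and "V \<equiv> fps_const v" and "S \<equiv> fps_const s" and "T \<equiv> fps_const t"
  shows "F_123_132 p q u v s t =
    (1 + Q^2 * S^2 * V * x^2 + S * T * U * V * x * (1 + P * T * U * x)
       - Q * S * x * (1 + P * U * V^2 * x^2 * S * T * (-1 + T) * (-1 + U) + V * (1 + P * x + S * T * U * x)))
    / (1 + Q^2 * S^2 * V * x^2 - Q * S * x * (1 + V + P * V * x))"
proof -
  let ?F = "F_123_132 p q u v s t"
  define c1 c2 where "c1 = q * s * (1 + v)" and "c2 = q^2 * s^2 * v - p * q * s * v"
  have den: "1 + Q^2 * S^2 * V * x^2 - Q * S * x * (1 + V + P * V * x) =
      1 - fps_const c1 * fps_X + fps_const c2 * fps_X^2" (is "?D = _")
    unfolding x_def P_def Q_def V_def S_def c1_def c2_def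
    by (rule fps_ext) (simp add: algebra_simps power2_eq_square)
  have "?F * ?D =
      fps_const (?F $ 0) + fps_const (?F $ 1 - c1 * ?F $ 0) * fps_X
        + fps_const (?F $ 2 - c1 * ?F $ 1 + c2 * ?F $ 0) * fps_X^2
        + fps_const (?F $ 3 - c1 * ?F $ 2 + c2 * ?F $ 1) * fps_X^3"
    unfolding den c1_def c2_def
    by (rule fps_times_second_order_recurrence[OF coeff_F_123_132_recurrence])
  also have "\<dots> = 1 + Q^2 * S^2 * V * x^2 + S * T * U * V * x * (1 + P * T * U * x)
       - Q * S * x * (1 + P * U * V^2 * x^2 * S * T * (-1 + T) * (-1 + U) + V * (1 + P * x + S * T * U * x))"
    unfolding x_def P_def Q_def U_def V_def S_def T_def c1_def c2_def coeff_0_F_123_132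
      coeff_F_123_132_initial
    by (rule fps_ext) (simp add: algebra_simps power2_eq_square power3_eq_cube)
  finally have "?F * ?D = \<dots>" .
  moreover have "?D $ 0 \<noteq> 0"
    unfolding den by simp
  ultimately show ?thesis
    by (metis fps_zero_nth nonzero_mult_div_cancel_right)
qed

end
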